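(* Let $\Omega\subset\mathbb{R}^2$ be a bounded open set, and let the kernels $\gamma_\delta$, polygons, $\underline{r}(n_\delta)$, $\gamma_{\delta,n_\delta}$ and the norms be as in the context. Assume that $$\lim_{\delta\to0}\int_{\|\mathbf{y}-\mathbf{x}\|_2\le\underline{r}(n_\delta)}|y_i-x_i|^2\,\gamma_\delta(\mathbf{x},\mathbf{y})\,d\mathbf{y}=1,\qquad i=1,2.$$ Then there exist $\delta_0>0$ and $C>0$ independent of $\delta$ such that for all $\delta<\delta_0$ and all $u\in V(\widehat{\Omega}_\delta)$, $$\|u\|_{L^2(\Omega)}\le C\|u\|_{\underline{r}(n_\delta)},$$ and consequently $$\|u\|_{L^2(\Omega)}\le C\|u\|_{\delta,n_\delta}.$$
   Context: $B_\delta(\mathbf{x})=\{\mathbf{y}:\|\mathbf{y}-\mathbf{x}\|_2\le\delta\}$; $\Omega^c_\delta=\{\mathbf{y}\in\mathbb{R}^2\setminus\Omega:\operatorname{dist}(\mathbf{y},\partial\Omega)<\delta\}$; $\widehat{\Omega}_\delta=\Omega\cup\Omega^c_\delta$. Each kernel is $\gamma_\delta(\mathbf{x},\mathbf{y})=\widetilde{\gamma}_\delta(\|\mathbf{y}-\mathbf{x}\|_2)$ with $\widetilde{\gamma}_\delta\ge0$, $\widetilde{\gamma}_\delta(t)>0$ for $0\le t<\delta$, $\widetilde{\gamma}_\delta(t)=0$ for $t>\delta$, and $\int_{B_\delta(\mathbf{0})}z_i^2\widetilde{\gamma}_\delta(\|\mathbf{z}\|_2)d\mathbf{z}=1$, $i=1,2$.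 For each $\delta$ and each point $\mathbf{x}$ a polygon $B_{\delta,n_{\delta,\mathbf{x}}}(\mathbf{x})\subset B_\delta(\mathbf{x})$ is given; $r_{\delta,\mathbf{x}}$ is the radius of the largest ball centered at $\mathbf{x}$ contained in it and $\underline{r}(n_\delta)=\inf_{\mathbf{x}\in\Omega}r_{\delta,\mathbf{x}}$. $\gamma_{\delta,n_{\delta,\mathbf{x}}}(\mathbf{x},\mathbf{y})=\gamma_\delta(\mathbf{x},\mathbf{y})\mathbf{1}[\mathbf{y}\in B_{\delta,n_{\delta,\mathbf{x}}}(\mathbf{x})]$, $\gamma_{\delta,n_\delta}(\mathbf{x},\mathbf{y})=\tfrac12(\gamma_{\delta,n_{\delta,\mathbf{x}}}(\mathbf{x},\mathbf{y})+\gamma_{\delta,n_{\delta,\mathbf{y}}}(\mathbf{y},\mathbf{x}))$. Norms: $\|u\|_\delta^2=\int_{\widehat{\Omega}_\delta}\int_{\widehat{\Omega}_\delta}(u(\mathbf{y})-u(\mathbf{x}))^2\gamma_\delta\,d\mathbf{y}d\mathbf{x}$, $\|u\|_{\delta,n_\delta}^2$ the same with $\gamma_{\delta,n_\delta}$ in place of $\gamma_\delta$, and $\|u\|_{\underline{r}(n_\delta)}^2$ the same with $\gamma_\delta(\mathbf{x},\mathbf{y})\chi_{\underline{r}(n_\delta)}(\|\mathbf{y}-\mathbf{x}\|_2)$, where $\chi_r$ is the indicator of $[0,r]$. $V(\widehat{\Omega}_\delta)=\{u\in L^2(\widehat{\Omega}_\delta):\|u\|_\delta<\infty,\ u=0\text{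 on }\Omega^c_\delta\}$. *)

theory Defs
  imports "HOL-Analysis.Analysis"
begin

type_synonym pt = "real ^ 2"

definition polygon :: "pt set \<Rightarrow> bool" where
  "polygon P \<longleftrightarrow> (\<exists>T. finite T \<and> (\<forall>S\<in>T. finite S) \<and> P = \<Union> ((\<lambda>S. convex hull S) ` T))"

definition Omega_c :: "pt set \<Rightarrow> real \<Rightarrow> pt set" where
  "Omega_c \<Omega> \<delta> = {y. y \<notin> \<Omega> \<and> infdist y (frontier \<Omega>) < \<delta>}"

definition Omega_hat :: "pt set \<Rightarrow> real \<Rightarrow> pt set" where
  "Omega_hat \<Omega> \<delta> = \<Omega> \<union> Omega_c \<Omega> \<delta>"

definition kern :: "(real \<Rightarrow> real \<Rightarrow> real) \<Rightarrow> real \<Rightarrow> pt \<Rightarrow> pt \<Rightarrow> real" where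
  "kern g \<delta> x y = g \<delta> (norm (y - x))"

definition inball_radius :: "pt set \<Rightarrow> pt \<Rightarrow> real" where
  "inball_radius P x = Sup ({0} \<union> {r. 0 \<le> r \<and> cball x r \<subseteq> P})"

definition r_low :: "pt set \<Rightarrow> (real \<Rightarrow> pt \<Rightarrow> pt set) \<Rightarrow> real \<Rightarrow> real" where
  "r_low \<Omega> P \<delta> = Inf ((\<lambda>x. inball_radius (P \<delta> x) x) ` \<Omega>)"

definition kern_poly :: "(real \<Rightarrow> real \<Rightarrow> real) \<Rightarrow> (real \<Rightarrow> pt \<Rightarrow> pt set) \<Rightarrow> real \<Rightarrow> pt \<Rightarrow> pt \<Rightarrow> real" where
  "kern_poly g P \<delta> x y =
     (kern g \<delta> x y * indicator (P \<delta> x) y + kern g \<delta> y x * indicator (P \<delta> y) x) / 2"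

definition kern_trunc :: "(real \<Rightarrow> real \<Rightarrow> real) \<Rightarrow> real \<Rightarrow> real \<Rightarrow> pt \<Rightarrow> pt \<Rightarrow> real" where
  "kern_trunc g \<delta> r x y = kern g \<delta> x y * indicator {0..r} (norm (y - x))"

definition nl_norm_sq :: "(pt \<Rightarrow> pt \<Rightarrow> real) \<Rightarrow> pt set \<Rightarrow> (pt \<Rightarrow> real) \<Rightarrow> ennreal" where
  "nl_norm_sq K A u =
     (\<integral>\<^sup>+ x\<in>A. (\<integral>\<^sup>+ y\<in>A. ennreal ((u y - u x)^2 * K x y) \<partial>lebesgue) \<partial>lebesgue)"

definition L2_norm_sq :: "pt set \<Rightarrow> (pt \<Rightarrow> real) \<Rightarrow> ennreal" where
  "L2_norm_sq A u = (\<integral>\<^sup>+ x\<in>A. ennreal ((u x)^2) \<partial>lebesgue)"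

definition Vspace :: "pt set \<Rightarrow> (real \<Rightarrow> real \<Rightarrow> real) \<Rightarrow> real \<Rightarrow> (pt \<Rightarrow> real) set" where
  "Vspace \<Omega> g \<delta> = {u. set_borel_measurable lebesgue (Omega_hat \<Omega> \<delta>) u
      \<and> L2_norm_sq (Omega_hat \<Omega> \<delta>) u < \<infinity>
      \<and> nl_norm_sq (kern g \<delta>) (Omega_hat \<Omega> \<delta>) u < \<infinity>
      \<and> (\<forall>x\<in>Omega_c \<Omega> \<delta>. u x = 0)}"

end

theory Submission
  imports Defs
begin

text \<open>Extend \<open>u\<close> by zero outside \<open>\<Omega>\<close> to \<open>w\<close>, let \<open>N\<close> be its squared \<open>L\<^sup>2\<close> norm and \<open>L\<close> exceed the
  diameter of \<open>\<Omega>\<close>. The shift energy \<open>D h = \<integral> (w (x + h) - w x)\<^sup>2 dx\<close> satisfies \<open>D (2h) \<le> 4 D h\<close>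
  and \<open>D h = 2N\<close> for \<open>|h| \<ge> L\<close>, hence \<open>D h \<ge> |h|\<^sup>2 N / (2L\<^sup>2)\<close> for \<open>|h| \<le> L\<close>. Since \<open>u\<close> vanishes on
  \<open>\<Omega>\<^sup>c\<^sub>\<delta>\<close> and the kernel vanishes beyond distance \<open>\<delta>\<close>, the ball-truncated energy of \<open>u\<close> equals
  \<open>\<integral> K h D h dh\<close> for the truncated kernel \<open>K\<close>, so it is at least \<open>N/(2L\<^sup>2) \<integral> K h |h|\<^sup>2 dh\<close>; by the limit
  hypothesis at one point of \<open>\<Omega>\<close> this second moment exceeds \<open>1/2\<close> for small \<open>\<delta>\<close>. Finally, the ball of radius \<open>r(n\<^sub>\<delta>)\<close> around a point of
  \<open>\<Omega>\<close> lies in its polygon, so the ball-truncated kernel is at most twice the polygonal one.\<close>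

section \<open>Translations and Borel representatives\<close>

lemma nn_integral_lborel_translate:
  fixes f :: "'a::euclidean_space \<Rightarrow> ennreal"
  assumes [measurable]: "f \<in> borel_measurable borel"
  shows "(\<integral>\<^sup>+ x. f (c + x) \<partial>lborel) = (\<integral>\<^sup>+ x. f x \<partial>lborel)"
proof -
  have "(\<integral>\<^sup>+ x. f x \<partial>lborel) = (\<integral>\<^sup>+ x. f x \<partial>distr lborel borel ((+) c))"
    by (simp add: lborel_distr_plus)
  also have "\<dots> = (\<integral>\<^sup>+ x. f (c + x) \<partial>lborel)"
    by (subst nn_integral_distr) auto
  finally show ?thesis by simp
qed

lemma AE_lborel_translate:
  fixes c :: "'a::euclidean_space"
  assumes "AE y in lborel. P y"
  shows "AE h in lborel. P (c + h)"
proof -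
  from assms obtain N where N: "N \<in> null_sets lborel" "{y \<in> space lborel. \<not> P y} \<subseteq> N"
    by (metis AE_E null_setsI)
  then have "N \<in> null_sets (distr lborel borel ((+) c))"
    by (simp add: lborel_distr_plus)
  then have "(+) c -` N \<in> null_sets lborel"
    by (subst (asm) null_sets_distr_iff) auto
  then show ?thesis
    by (rule AE_I') (use N in auto)
qed

lemma AE_lborel_component_neq_0: "AE h in lborel. (h::real^'n) $ i \<noteq> 0"
proof -
  have "negligible {h::real^'n. axis i 1 \<bullet> h = 0}"
    by (rule negligible_hyperplane) simp
  then have "{h::real^'n. h $ i = 0} \<in> null_sets lborel"
    by (simp add: negligible_iff_null_sets null_sets_completion_iff[symmetric] inner_axis')
  then show ?thesis
    by (rule AE_I') auto
qed

text \<open>Unlike \<open>nn_integral_cmult\<close> this needs no measurability: the kernels \<open>g \<delta>\<close> are arbitrary functions.\<close>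
lemma nn_integral_cmult_le:
  fixes c :: real
  assumes "0 < c"
  shows "(\<integral>\<^sup>+ x. ennreal c * f x \<partial>M) \<le> ennreal c * integral\<^sup>N M f"
  unfolding nn_integral_def
proof (rule SUP_least)
  fix s assume "s \<in> {s. simple_function M s \<and> s \<le> (\<lambda>x. ennreal c * f x)}"
  then have s: "simple_function M s" "\<And>x. s x \<le> ennreal c * f x"
    by (auto simp: le_fun_def)
  define s' where "s' x = ennreal (1 / c) * s x" for x
  have inv: "ennreal (1 / c) * ennreal c = 1"
    using assms by (simp add: ennreal_mult[symmetric])
  have "s' \<le> f"
  proof (rule le_funI)
    fix x
    have "s' x \<le> ennreal (1 / c) * (ennreal c * f x)"
      unfolding s'_def by (rule mult_left_mono[OF s(2)]) simp
    then show "s' x \<le> f x"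
      by (simp add: mult.assoc[symmetric] inv)
  qed
  moreover have "simple_function M s'"
    unfolding s'_def using s(1) by simp
  ultimately have "integral\<^sup>S M s' \<le> (SUP s \<in> {s. simple_function M s \<and> s \<le> f}. integral\<^sup>S M s)"
    by (auto intro!: SUP_upper)
  moreover have "integral\<^sup>S M s = ennreal c * integral\<^sup>S M s'"
    unfolding s'_def simple_integral_mult[OF s(1)]
    by (simp add: mult.assoc[symmetric] mult.commute[of "ennreal c"] inv)
  ultimately show "integral\<^sup>S M s \<le> ennreal c * (SUP s \<in> {s. simple_function M s \<and> s \<le> f}. integral\<^sup>S M s)"
    by (simp add: mult_left_mono)
qed

lemma zero_extension_borel_representative:
  fixes u :: "'a::euclidean_space \<Rightarrow> real"
  assumes "set_borel_measurable lebesgue S u" "S \<in> sets borel"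
  obtains w where "w \<in> borel_measurable borel" "\<And>x. x \<notin> S \<Longrightarrow> w x = 0"
    "AE x in lborel. w x = indicator S x * u x"
proof -
  have "(\<lambda>x. indicator S x * u x) \<in> borel_measurable lebesgue"
    using assms(1) by (simp add: set_borel_measurable_def)
  then obtain w0 where w0: "w0 \<in> borel_measurable lborel" "AE x in lborel. indicator S x * u x = w0 x"
    using completion_ex_borel_measurable_real by blast
  show thesis
  proof (rule that[of "\<lambda>x. indicator S x * w0 x"])
    show "(\<lambda>x. indicator S x * w0 x) \<in> borel_measurable borel"
      using w0(1) assms(2) by simp
    show "AE x in lborel. indicator S x * w0 x = indicator S x * u x"
      using w0(2) by eventually_elim (auto simp: indicator_def)
  qed simp
qed

text \<open>The kernel profile need not be measurable; integrability of its second moment in direction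
  \<open>i\<close> makes \<open>(h $ i)\<^sup>2 * k h\<close> Lebesgue measurable, and dividing a Borel representative of it by
  \<open>(h $ i)\<^sup>2\<close>, which vanishes only on a null hyperplane, gives a Borel representative of \<open>k\<close>.\<close>
lemma borel_kernel_of_integrable_moment:
  fixes k :: "real^'n \<Rightarrow> real" and x0 :: "real^'n"
  assumes int: "integrable lebesgue (\<lambda>y. ((y - x0) $ i)^2 * k (y - x0))"
    and k_nonneg: "\<And>h. 0 \<le> k h"
  obtains K where "K \<in> borel_measurable borel" "\<And>h. 0 \<le> K h" "AE h in lborel. K h = k h"
    "(\<integral>\<^sup>+ h. ennreal ((h $ i)^2 * K h) \<partial>lborel)
       = ennreal (LINT y|lebesgue. ((y - x0) $ i)^2 * k (y - x0))"
proof -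
  let ?F = "\<lambda>y. ((y - x0) $ i)^2 * k (y - x0)"
  obtain G where G: "G \<in> borel_measurable lborel" "AE y in lborel. ?F y = G y"
    using completion_ex_borel_measurable_real[OF borel_measurable_integrable[OF int]] by blast
  have [measurable]: "G \<in> borel_measurable borel"
    using G(1) by simp
  define K where "K h = max 0 (G (x0 + h)) / (h $ i)^2" for h
  have G_shift: "AE h in lborel. ?F (x0 + h) = G (x0 + h)"
    using G(2) by (rule AE_lborel_translate)
  have moment: "AE h in lborel. (h $ i)^2 * K h = (h $ i)^2 * k h"
    using G_shift AE_lborel_component_neq_0[of i]
  proof eventually_elim
    case (elim h)
    then have "G (x0 + h) = (h $ i)^2 * k h"
      by simp
    moreover have "0 \<le> (h $ i)^2 * k h"
      using k_nonneg by simp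
    ultimately show ?case
      using elim(2) by (simp add: K_def)
  qed
  show thesis
  proof (rule that)
    show "K \<in> borel_measurable borel"
      unfolding K_def by measurable
    show "0 \<le> K h" for h
      by (simp add: K_def)
    show "AE h in lborel. K h = k h"
      using moment AE_lborel_component_neq_0[of i] by eventually_elim simp
    have "AE h in lborel. ennreal ((h $ i)^2 * K h) = ennreal (G (x0 + h))"
      using moment G_shift by eventually_elim auto
    then have "(\<integral>\<^sup>+ h. ennreal ((h $ i)^2 * K h) \<partial>lborel) = (\<integral>\<^sup>+ h. ennreal (G (x0 + h)) \<partial>lborel)"
      by (rule nn_integral_cong_AE)
    also have "\<dots> = (\<integral>\<^sup>+ y. ennreal (G y) \<partial>lborel)"
      by (rule nn_integral_lborel_translate) simp
    also have "\<dots> = (\<integral>\<^sup>+ y. ennreal (?F y) \<partial>lebesgue)"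
      unfolding nn_integral_completion using G(2) by (intro nn_integral_cong_AE) auto
    also have "\<dots> = ennreal (LINT y|lebesgue. ?F y)"
      using int k_nonneg by (intro nn_integral_eq_integral) auto
    finally show "(\<integral>\<^sup>+ h. ennreal ((h $ i)^2 * K h) \<partial>lborel) = ennreal (LINT y|lebesgue. ?F y)" .
  qed
qed

section \<open>Shift energy and a nonlocal Poincare inequality\<close>

definition shift_energy :: "('a::euclidean_space \<Rightarrow> real) \<Rightarrow> 'a \<Rightarrow> ennreal" where
  "shift_energy w h = (\<integral>\<^sup>+ x. ennreal ((w (x + h) - w x)^2) \<partial>lborel)"

lemma shift_energy_add_self_le:
  assumes [measurable]: "w \<in> borel_measurable borel"
  shows "shift_energy w (h + h) \<le> 4 * shift_energy w h"
proof -
  let ?f = "\<lambda>x. ennreal ((w (x + h) - w x)^2)"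
  have "shift_energy w (h + h) \<le> (\<integral>\<^sup>+ x. 2 * ?f (h + x) + 2 * ?f x \<partial>lborel)"
    unfolding shift_energy_def
  proof (rule nn_integral_mono)
    fix x
    have "(w (x + (h + h)) - w x)^2 \<le> 2 * (w (h + x + h) - w (h + x))^2 + 2 * (w (x + h) - w x)^2"
      using sum_squares_bound[of "w (x + h + h) - w (x + h)" "w (x + h) - w x"]
      by (simp add: algebra_simps power2_eq_square)
    then have "ennreal ((w (x + (h + h)) - w x)^2)
        \<le> ennreal (2 * (w (h + x + h) - w (h + x))^2 + 2 * (w (x + h) - w x)^2)"
      by (rule ennreal_leI)
    then show "ennreal ((w (x + (h + h)) - w x)^2) \<le> 2 * ?f (h + x) + 2 * ?f x"
      by (simp add: ennreal_mult add.assoc)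
  qed
  also have "\<dots> = 2 * (\<integral>\<^sup>+ x. ?f (h + x) \<partial>lborel) + 2 * (\<integral>\<^sup>+ x. ?f x \<partial>lborel)"
    by (simp add: nn_integral_add nn_integral_cmult)
  also have "(\<integral>\<^sup>+ x. ?f (h + x) \<partial>lborel) = (\<integral>\<^sup>+ x. ?f x \<partial>lborel)"
    by (rule nn_integral_lborel_translate) simp
  finally show ?thesis
    by (simp add: shift_energy_def flip: distrib_right)
qed

lemma shift_energy_scaleR_power2_le:
  assumes [measurable]: "w \<in> borel_measurable borel"
  shows "shift_energy w ((2::real)^k *\<^sub>R h) \<le> 4^k * shift_energy w h"
proof (induction k)
  case 0
  then show ?case by simp
next
  case (Suc k)
  have "shift_energy w ((2::real)^Suc k *\<^sub>R h)
      = shift_energy w ((2::real)^k *\<^sub>R h + (2::real)^k *\<^sub>R h)"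
    by (simp flip: scaleR_add_left)
  also have "\<dots> \<le> 4 * shift_energy w ((2::real)^k *\<^sub>R h)"
    by (rule shift_energy_add_self_le) fact
  also have "\<dots> \<le> 4 * (4^k * shift_energy w h)"
    by (rule mult_left_mono[OF Suc]) simp
  finally show ?case
    by (simp add: mult.assoc)
qed

lemma shift_energy_far:
  assumes [measurable]: "w \<in> borel_measurable borel"
    and supp: "\<And>x. x \<notin> S \<Longrightarrow> w x = 0"
    and diam: "\<And>x y. x \<in> S \<Longrightarrow> y \<in> S \<Longrightarrow> norm (y - x) < L"
    and far: "L \<le> norm h"
  shows "shift_energy w h = 2 * (\<integral>\<^sup>+ x. ennreal ((w x)^2) \<partial>lborel)"
proof -
  let ?f = "\<lambda>x. ennreal ((w x)^2)"
  have "ennreal ((w (x + h) - w x)^2) = ?f (h + x) + ?f x" for x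
    using diam[of x "x + h"] supp far by (force simp: add.commute)
  then have "shift_energy w h = (\<integral>\<^sup>+ x. ?f (h + x) + ?f x \<partial>lborel)"
    unfolding shift_energy_def by simp
  also have "\<dots> = (\<integral>\<^sup>+ x. ?f (h + x) \<partial>lborel) + (\<integral>\<^sup>+ x. ?f x \<partial>lborel)"
    by (simp add: nn_integral_add)
  also have "(\<integral>\<^sup>+ x. ?f (h + x) \<partial>lborel) = (\<integral>\<^sup>+ x. ?f x \<partial>lborel)"
    by (rule nn_integral_lborel_translate) simp
  finally show ?thesis
    by (simp add: mult_2)
qed

lemma ex_power2_mult_between:
  fixes a b :: real
  assumes "0 < a" "a \<le> b"
  obtains k :: nat where "b \<le> 2^k * a" "2^k * a \<le> 2 * b"
proof -
  obtain n :: nat where "b / a < 2^n"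
    using real_arch_pow[of 2 "b / a"] by auto
  then have ex: "\<exists>k::nat. b \<le> 2^k * a"
    using assms by (auto simp: field_simps intro: less_imp_le)
  define k where "k = (LEAST k::nat. b \<le> 2^k * a)"
  have "b \<le> 2^k * a"
    unfolding k_def by (rule LeastI_ex[OF ex])
  moreover have "2^k * a \<le> 2 * b"
  proof (cases k)
    case 0
    then show ?thesis using assms by simp
  next
    case (Suc m)
    then have "\<not> b \<le> 2^m * a"
      using not_less_Least[of m "\<lambda>k. b \<le> 2^k * a"] unfolding k_def by auto
    then show ?thesis using Suc by simp
  qed
  ultimately show thesis by (rule that)
qed

lemma shift_energy_lower_bound:
  assumes [measurable]: "w \<in> borel_measurable borel"
    and supp: "\<And>x. x \<notin> S \<Longrightarrow> w x = 0"
    and diam: "\<And>x y. x \<in> S \<Longrightarrow> y \<in> S \<Longrightarrow> norm (y - x) < L"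
    and "0 < L" and short: "norm h \<le> L"
  shows "ennreal ((norm h)^2 / (2 * L^2)) * (\<integral>\<^sup>+ x. ennreal ((w x)^2) \<partial>lborel) \<le> shift_energy w h"
proof (cases "h = 0")
  case True
  then show ?thesis by simp
next
  case False
  let ?N = "\<integral>\<^sup>+ x. ennreal ((w x)^2) \<partial>lborel"
  obtain k where k: "L \<le> 2^k * norm h" "2^k * norm h \<le> 2 * L"
    using ex_power2_mult_between[of "norm h" L] False short by auto
  have "2 * ?N = shift_energy w ((2::real)^k *\<^sub>R h)"
    using k(1) by (intro shift_energy_far[symmetric, OF _ supp diam]) simp_all
  also have "\<dots> \<le> 4^k * shift_energy w h"
    by (rule shift_energy_scaleR_power2_le) fact
  also have "(4::ennreal)^k = ennreal (4^k)"
    using ennreal_power[of 4 k] by simp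
  finally have doubled: "2 * ?N \<le> ennreal (4^k) * shift_energy w h" .
  have "(4::real)^k = 2^k * 2^k"
    by (simp flip: power_mult_distrib)
  then have "4^k * (norm h)^2 = (2^k * norm h)^2"
    by (simp add: power2_eq_square)
  also have "\<dots> \<le> (2 * L)^2"
    using k(2) by (intro power_mono) auto
  finally have "(norm h)^2 / (4 * L^2) * 4^k \<le> 1"
    using \<open>0 < L\<close> by (simp add: field_simps)
  then have factor: "ennreal ((norm h)^2 / (4 * L^2)) * ennreal (4^k) \<le> 1"
    using ennreal_mult[of "(norm h)^2 / (4 * L^2)" "4^k"] ennreal_leI by fastforce
  have "ennreal ((norm h)^2 / (2 * L^2)) * ?N = ennreal ((norm h)^2 / (4 * L^2)) * (2 * ?N)"
    using ennreal_mult[of "(norm h)^2 / (4 * L^2)" 2] by (simp add: mult.assoc)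
  also have "\<dots> \<le> ennreal ((norm h)^2 / (4 * L^2)) * ennreal (4^k) * shift_energy w h"
    unfolding mult.assoc by (rule mult_left_mono[OF doubled]) simp
  also have "\<dots> \<le> 1 * shift_energy w h"
    by (rule mult_right_mono[OF factor]) simp
  finally show ?thesis
    by simp
qed

definition nonlocal_energy :: "('a::euclidean_space \<Rightarrow> real) \<Rightarrow> ('a \<Rightarrow> real) \<Rightarrow> ennreal" where
  "nonlocal_energy K w =
     (\<integral>\<^sup>+ x. (\<integral>\<^sup>+ y. ennreal ((w y - w x)^2 * K (y - x)) \<partial>lborel) \<partial>lborel)"

lemma nonlocal_energy_cong_AE:
  fixes K k w v :: "'a::euclidean_space \<Rightarrow> real"
  assumes "AE x in lborel. w x = v x" and "AE h in lborel. K h = k h"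
  shows "nonlocal_energy K w = nonlocal_energy k v"
  unfolding nonlocal_energy_def
proof (intro nn_integral_cong_AE)
  show "AE x in lborel. (\<integral>\<^sup>+ y. ennreal ((w y - w x)^2 * K (y - x)) \<partial>lborel)
      = (\<integral>\<^sup>+ y. ennreal ((v y - v x)^2 * k (y - x)) \<partial>lborel)"
    using assms(1)
  proof eventually_elim
    case (elim x)
    have "AE y in lborel. K (- x + y) = k (- x + y)"
      by (rule AE_lborel_translate) fact
    with assms(1) have "AE y in lborel.
        ennreal ((w y - w x)^2 * K (y - x)) = ennreal ((v y - v x)^2 * k (y - x))"
      by eventually_elim (simp add: elim)
    then show ?case
      by (rule nn_integral_cong_AE)
  qed
qed

lemma nonlocal_energy_eq_shift_energy:
  fixes K w :: "'a::euclidean_space \<Rightarrow> real"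
  assumes [measurable]: "w \<in> borel_measurable borel" "K \<in> borel_measurable borel"
    and K_nonneg: "\<And>h. 0 \<le> K h"
  shows "nonlocal_energy K w = (\<integral>\<^sup>+ h. ennreal (K h) * shift_energy w h \<partial>lborel)"
proof -
  have "(\<integral>\<^sup>+ y. ennreal ((w y - w x)^2 * K (y - x)) \<partial>lborel)
      = (\<integral>\<^sup>+ h. ennreal ((w (x + h) - w x)^2 * K h) \<partial>lborel)" for x
    using nn_integral_lborel_translate[of "\<lambda>y. ennreal ((w y - w x)^2 * K (y - x))" x]
    by (simp add: add.commute)
  then have "nonlocal_energy K w
      = (\<integral>\<^sup>+ x. (\<integral>\<^sup>+ h. ennreal ((w (x + h) - w x)^2 * K h) \<partial>lborel) \<partial>lborel)"
    by (simp add: nonlocal_energy_def)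
  also have "\<dots> = (\<integral>\<^sup>+ h. (\<integral>\<^sup>+ x. ennreal ((w (x + h) - w x)^2 * K h) \<partial>lborel) \<partial>lborel)"
    by (rule lborel_pair.Fubini'[symmetric]) (simp flip: lborel_prod)
  also have "\<dots> = (\<integral>\<^sup>+ h. ennreal (K h) * shift_energy w h \<partial>lborel)"
    unfolding shift_energy_def using K_nonneg
    by (simp add: ennreal_mult'' mult.commute nn_integral_cmult flip: nn_integral_cmult)
  finally show ?thesis .
qed

lemma nonlocal_poincare:
  fixes K w :: "'a::euclidean_space \<Rightarrow> real"
  assumes [measurable]: "w \<in> borel_measurable borel" "K \<in> borel_measurable borel"
    and supp: "\<And>x. x \<notin> S \<Longrightarrow> w x = 0"
    and diam: "\<And>x y. x \<in> S \<Longrightarrow> y \<in> S \<Longrightarrow> norm (y - x) < L" and "0 < L"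
    and K_nonneg: "\<And>h. 0 \<le> K h" and K_short: "AE h in lborel. K h \<noteq> 0 \<longrightarrow> norm h \<le> L"
  shows "(\<integral>\<^sup>+ h. ennreal (K h * (norm h)^2) \<partial>lborel) * (\<integral>\<^sup>+ x. ennreal ((w x)^2) \<partial>lborel)
    \<le> ennreal (2 * L^2) * nonlocal_energy K w"
proof -
  let ?N = "\<integral>\<^sup>+ x. ennreal ((w x)^2) \<partial>lborel"
  have "(\<integral>\<^sup>+ h. ennreal (K h * (norm h)^2) \<partial>lborel) * ?N
      = (\<integral>\<^sup>+ h. ennreal (K h * (norm h)^2) * ?N \<partial>lborel)"
    by (simp add: nn_integral_multc)
  also have "\<dots> \<le> (\<integral>\<^sup>+ h. ennreal (2 * L^2) * (ennreal (K h) * shift_energy w h) \<partial>lborel)"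
    using K_short
  proof (intro nn_integral_mono_AE, eventually_elim)
    case (elim h)
    show ?case
    proof (cases "K h = 0")
      case False
      then have "norm h \<le> L"
        using elim by simp
      with assms(1) supp diam \<open>0 < L\<close>
      have lower: "ennreal ((norm h)^2 / (2 * L^2)) * ?N \<le> shift_energy w h"
        by (rule shift_energy_lower_bound)
      have "2 * L^2 * K h * ((norm h)^2 / (2 * L^2)) = K h * (norm h)^2"
        using \<open>0 < L\<close> by simp
      then have "ennreal (K h * (norm h)^2) * ?N
          = ennreal (2 * L^2 * K h) * (ennreal ((norm h)^2 / (2 * L^2)) * ?N)"
        using ennreal_mult[of "2 * L^2 * K h" "(norm h)^2 / (2 * L^2)"] K_nonneg[of h]
        by (simp add: mult.assoc)
      also have "\<dots> \<le> ennreal (2 * L^2 * K h) * shift_energy w h"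
        by (rule mult_left_mono[OF lower]) simp
      finally show ?thesis
        using ennreal_mult[of "2 * L^2" "K h"] K_nonneg[of h] by (simp add: mult.assoc)
    qed simp
  qed
  also have "\<dots> \<le> ennreal (2 * L^2) * (\<integral>\<^sup>+ h. ennreal (K h) * shift_energy w h \<partial>lborel)"
    using \<open>0 < L\<close> by (intro nn_integral_cmult_le) simp
  finally show ?thesis
    by (simp add: nonlocal_energy_eq_shift_energy K_nonneg)
qed

section \<open>The interaction domain and the polygons\<close>

lemma norm_diff_gt_outside_Omega_hat:
  assumes "open \<Omega>" "x \<in> \<Omega>" "y \<notin> Omega_hat \<Omega> \<delta>"
  shows "\<delta> < norm (y - x)"
proof -
  have "y \<notin> \<Omega>" and far: "\<delta> \<le> infdist y (frontier \<Omega>)"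
    using assms(3) by (auto simp: Omega_hat_def Omega_c_def)
  then have "closed_segment x y \<inter> frontier \<Omega> \<noteq> {}"
    using assms(2) by (intro connected_Int_frontier) auto
  then obtain p where p: "p \<in> closed_segment x y" "p \<in> frontier \<Omega>"
    by auto
  have "0 < norm (p - x)"
    using p(2) assms(1,2) by (auto simp: frontier_def interior_open)
  moreover have "\<delta> \<le> norm (y - p)"
    using infdist_le[OF p(2), of y] far by (simp add: dist_norm)
  moreover have "norm (y - x) = norm (p - x) + norm (y - p)"
    using p(1) by (simp add: between_mem_segment[symmetric] between dist_norm norm_minus_commute)
  ultimately show ?thesis
    by linarith
qed

lemma polygon_closed: "polygon P \<Longrightarrow> closed P"
  unfolding polygon_def
  by (auto intro!: compact_imp_closed finite_imp_compact_convex_hull)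

lemma bdd_above_inball_radii:
  fixes x :: "'a::euclidean_space"
  assumes "P \<subseteq> cball x d"
  shows "bdd_above ({0} \<union> {r. 0 \<le> r \<and> cball x r \<subseteq> P})"
proof (rule bdd_aboveI)
  fix r assume "r \<in> {0} \<union> {r. 0 \<le> r \<and> cball x r \<subseteq> P}"
  then have "r = 0 \<or> 0 \<le> r \<and> cball x r \<subseteq> cball x d"
    using assms by auto
  then show "r \<le> max 0 d"
    by (auto simp: cball_subset_cball_iff)
qed

lemma inball_radius_nonneg: "P \<subseteq> cball x d \<Longrightarrow> 0 \<le> inball_radius P x"
  unfolding inball_radius_def by (rule cSup_upper[OF _ bdd_above_inball_radii]) auto

lemma mem_if_norm_diff_le_inball_radius:
  assumes "P \<subseteq> cball x d" "closed P" "0 < norm (y - x)" "norm (y - x) \<le> inball_radius P x"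
  shows "y \<in> P"
proof -
  let ?\<rho> = "inball_radius P x"
  have "ball x ?\<rho> \<subseteq> P"
  proof
    fix z assume "z \<in> ball x ?\<rho>"
    then obtain r where "r \<in> {0} \<union> {r. 0 \<le> r \<and> cball x r \<subseteq> P}" "dist x z < r"
      using less_cSup_iff[OF _ bdd_above_inball_radii[OF assms(1)]]
      by (auto simp: inball_radius_def)
    then show "z \<in> P"
      by auto
  qed
  then have "closure (ball x ?\<rho>) \<subseteq> P"
    using assms(2) by (simp add: closure_minimal)
  moreover have "0 < ?\<rho>"
    using assms(3,4) by linarith
  ultimately show ?thesis
    using assms(4) by (auto simp: dist_norm norm_minus_commute)
qed

lemma r_low_le_inball_radius:
  assumes "\<And>x. x \<in> \<Omega> \<Longrightarrow> P \<delta> x \<subseteq> cball x \<delta>" "x \<in> \<Omega>"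
  shows "r_low \<Omega> P \<delta> \<le> inball_radius (P \<delta> x) x"
  unfolding r_low_def
  using assms by (intro cInf_lower bdd_belowI[where m=0]) (auto intro: inball_radius_nonneg)

lemma mem_polygon_if_norm_diff_le_r_low:
  assumes "\<And>x. polygon (P \<delta> x) \<and> P \<delta> x \<subseteq> cball x \<delta>"
    and "x \<in> \<Omega>" "y \<noteq> x" "norm (y - x) \<le> r_low \<Omega> P \<delta>"
  shows "y \<in> P \<delta> x"
  using assms r_low_le_inball_radius[of \<Omega> P \<delta> x]
  by (intro mem_if_norm_diff_le_inball_radius[where d=\<delta>] polygon_closed) auto

section \<open>Comparison of the energies\<close>

lemma kern_trunc_le_kern_poly:
  assumes g_nonneg: "\<And>t. 0 \<le> t \<Longrightarrow> 0 \<le> g \<delta> t"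
    and P: "\<And>x. polygon (P \<delta> x) \<and> P \<delta> x \<subseteq> cball x \<delta>"
    and "x \<in> \<Omega>" "y \<noteq> x"
  shows "kern_trunc g \<delta> (r_low \<Omega> P \<delta>) x y \<le> 2 * kern_poly g P \<delta> x y"
proof (cases "norm (y - x) \<le> r_low \<Omega> P \<delta>")
  case True
  with P assms(3,4) have "y \<in> P \<delta> x"
    by (rule mem_polygon_if_norm_diff_le_r_low)
  then show ?thesis
    using g_nonneg by (simp add: kern_trunc_def kern_poly_def kern_def indicator_def)
next
  case False
  then show ?thesis
    using g_nonneg by (simp add: kern_trunc_def kern_poly_def kern_def indicator_def)
qed

lemma kern_trunc_energy_density_le_kern_poly:
  assumes g_nonneg: "\<And>t. 0 \<le> t \<Longrightarrow> 0 \<le> g \<delta> t"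
    and P: "\<And>x. polygon (P \<delta> x) \<and> P \<delta> x \<subseteq> cball x \<delta>"
    and u_zero: "\<forall>x\<in>Omega_c \<Omega> \<delta>. u x = 0"
    and "x \<in> Omega_hat \<Omega> \<delta>" "y \<in> Omega_hat \<Omega> \<delta>"
  shows "(u y - u x)^2 * kern_trunc g \<delta> (r_low \<Omega> P \<delta>) x y
    \<le> 2 * ((u y - u x)^2 * kern_poly g P \<delta> x y)"
proof -
  have "kern_trunc g \<delta> (r_low \<Omega> P \<delta>) x y \<le> 2 * kern_poly g P \<delta> x y \<or> u y = u x"
  proof (cases "y = x \<or> (x \<notin> \<Omega> \<and> y \<notin> \<Omega>)")
    case True
    then show ?thesis
      using u_zero assms(4,5) by (auto simp: Omega_hat_def)
  next
    case False
    then consider "x \<in> \<Omega>" "y \<noteq> x" | "y \<in> \<Omega>" "x \<noteq> y"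
      by blast
    then show ?thesis
    proof cases
      case 1
      then show ?thesis
        using kern_trunc_le_kern_poly[where g=g and P=P, OF g_nonneg P] by blast
    next
      case 2
      then have "kern_trunc g \<delta> (r_low \<Omega> P \<delta>) y x \<le> 2 * kern_poly g P \<delta> y x"
        using kern_trunc_le_kern_poly[where g=g and P=P, OF g_nonneg P] by blast
      then show ?thesis
        by (simp add: kern_trunc_def kern_poly_def kern_def norm_minus_commute add.commute)
    qed
  qed
  then show ?thesis
  proof
    assume "kern_trunc g \<delta> (r_low \<Omega> P \<delta>) x y \<le> 2 * kern_poly g P \<delta> x y"
    then have "(u y - u x)^2 * kern_trunc g \<delta> (r_low \<Omega> P \<delta>) x y
        \<le> (u y - u x)^2 * (2 * kern_poly g P \<delta> x y)"
      by (rule mult_left_mono) simp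
    then show ?thesis
      by (simp add: mult.left_commute)
  qed simp
qed

lemma nl_norm_sq_kern_trunc_le_kern_poly:
  assumes g_nonneg: "\<And>t. 0 \<le> t \<Longrightarrow> 0 \<le> g \<delta> t"
    and P: "\<And>x. polygon (P \<delta> x) \<and> P \<delta> x \<subseteq> cball x \<delta>"
    and u_zero: "\<forall>x\<in>Omega_c \<Omega> \<delta>. u x = 0"
  shows "nl_norm_sq (kern_trunc g \<delta> (r_low \<Omega> P \<delta>)) (Omega_hat \<Omega> \<delta>) u
    \<le> 2 * nl_norm_sq (kern_poly g P \<delta>) (Omega_hat \<Omega> \<delta>) u"
proof -
  let ?A = "Omega_hat \<Omega> \<delta>"
  let ?trunc = "\<lambda>x y. ennreal ((u y - u x)^2 * kern_trunc g \<delta> (r_low \<Omega> P \<delta>) x y)"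
  let ?poly = "\<lambda>x y. ennreal ((u y - u x)^2 * kern_poly g P \<delta> x y)"
  have inner: "(\<integral>\<^sup>+ y \<in> ?A. ?trunc x y \<partial>lebesgue) \<le> 2 * (\<integral>\<^sup>+ y \<in> ?A. ?poly x y \<partial>lebesgue)"
    if "x \<in> ?A" for x
  proof -
    have "?trunc x y * indicator ?A y \<le> 2 * (?poly x y * indicator ?A y)" for y
    proof (cases "y \<in> ?A")
      case True
      with g_nonneg P u_zero that
      have "(u y - u x)^2 * kern_trunc g \<delta> (r_low \<Omega> P \<delta>) x y
          \<le> 2 * ((u y - u x)^2 * kern_poly g P \<delta> x y)"
        by (rule kern_trunc_energy_density_le_kern_poly)
      then have "?trunc x y \<le> ennreal (2 * ((u y - u x)^2 * kern_poly g P \<delta> x y))"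
        by (rule ennreal_leI)
      then show ?thesis
        using True by (simp add: ennreal_mult'[of 2])
    qed simp
    then have "(\<integral>\<^sup>+ y \<in> ?A. ?trunc x y \<partial>lebesgue) \<le> (\<integral>\<^sup>+ y. 2 * (?poly x y * indicator ?A y) \<partial>lebesgue)"
      by (rule nn_integral_mono)
    also have "\<dots> \<le> 2 * (\<integral>\<^sup>+ y \<in> ?A. ?poly x y \<partial>lebesgue)"
      using nn_integral_cmult_le[of 2] by simp
    finally show ?thesis .
  qed
  have "nl_norm_sq (kern_trunc g \<delta> (r_low \<Omega> P \<delta>)) ?A u
      \<le> (\<integral>\<^sup>+ x. 2 * ((\<integral>\<^sup>+ y \<in> ?A. ?poly x y \<partial>lebesgue) * indicator ?A x) \<partial>lebesgue)"
    unfolding nl_norm_sq_def using inner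
    by (intro nn_integral_mono) (auto simp: indicator_def)
  also have "\<dots> \<le> 2 * nl_norm_sq (kern_poly g P \<delta>) ?A u"
    unfolding nl_norm_sq_def using nn_integral_cmult_le[of 2] by simp
  finally show ?thesis .
qed

lemma nl_norm_sq_kern_trunc_eq_nonlocal_energy:
  assumes "open \<Omega>" and g_zero: "\<And>t. \<delta> < t \<Longrightarrow> g \<delta> t = 0"
    and u_zero: "\<forall>x\<in>Omega_c \<Omega> \<delta>. u x = 0"
  shows "nl_norm_sq (kern_trunc g \<delta> r) (Omega_hat \<Omega> \<delta>) u
    = nonlocal_energy (\<lambda>h. g \<delta> (norm h) * indicator {0..r} (norm h)) (\<lambda>x. indicator \<Omega> x * u x)"
proof -
  let ?A = "Omega_hat \<Omega> \<delta>"
  have density: "ennreal ((u y - u x)^2 * kern_trunc g \<delta> r x y) * indicator ?A y * indicator ?A x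
    = ennreal ((indicator \<Omega> y * u y - indicator \<Omega> x * u x)^2
        * (g \<delta> (norm (y - x)) * indicator {0..r} (norm (y - x))))" for x y
  proof -
    have "g \<delta> (norm (y - x)) = 0" if "x \<in> \<Omega> \<and> y \<notin> ?A \<or> y \<in> \<Omega> \<and> x \<notin> ?A"
      using that norm_diff_gt_outside_Omega_hat[OF \<open>open \<Omega>\<close>, of _ _ \<delta>] g_zero
      by (metis norm_minus_commute)
    moreover have "\<Omega> \<inter> Omega_c \<Omega> \<delta> = {}"
      by (auto simp: Omega_c_def)
    ultimately show ?thesis
      using u_zero unfolding kern_trunc_def kern_def Omega_hat_def
      by (cases "x \<in> \<Omega>"; cases "y \<in> \<Omega>"; cases "x \<in> Omega_c \<Omega> \<delta>"; cases "y \<in> Omega_c \<Omega> \<delta>") auto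
  qed
  have "(\<integral>\<^sup>+ y \<in> ?A. ennreal ((u y - u x)^2 * kern_trunc g \<delta> r x y) \<partial>lebesgue) * indicator ?A x
    = (\<integral>\<^sup>+ y. ennreal ((indicator \<Omega> y * u y - indicator \<Omega> x * u x)^2
        * (g \<delta> (norm (y - x)) * indicator {0..r} (norm (y - x)))) \<partial>lborel)" for x
    by (cases "x \<in> ?A") (simp_all add: nn_integral_completion flip: density)
  then show ?thesis
    by (simp add: nl_norm_sq_def nonlocal_energy_def nn_integral_completion)
qed

lemma trunc_kernel_borel_representative:
  fixes x0 :: pt
  assumes g_nonneg: "\<And>t. 0 \<le> t \<Longrightarrow> 0 \<le> g \<delta> t" and g_zero: "\<And>t. \<delta> < t \<Longrightarrow> g \<delta> t = 0"
    and moment: "1/2 < (LINT y:{y. norm (y - x0) \<le> r}|lebesgue. \<bar>y $ i - x0 $ i\<bar>^2 * kern g \<delta> x0 y)"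
  obtains K :: "pt \<Rightarrow> real" where "K \<in> borel_measurable borel" "\<And>h. 0 \<le> K h"
    "AE h in lborel. K h = g \<delta> (norm h) * indicator {0..r} (norm h)"
    "AE h in lborel. K h \<noteq> 0 \<longrightarrow> norm h \<le> \<delta>"
    "ennreal (1/2) \<le> (\<integral>\<^sup>+ h. ennreal (K h * (norm h)^2) \<partial>lborel)"
proof -
  define k where "k h = g \<delta> (norm h) * indicator {0..r} (norm h)" for h :: pt
  have k_nonneg: "0 \<le> k h" for h
    using g_nonneg by (simp add: k_def)
  have "(LINT y:{y. norm (y - x0) \<le> r}|lebesgue. \<bar>y $ i - x0 $ i\<bar>^2 * kern g \<delta> x0 y)
      = (LINT y|lebesgue. ((y - x0) $ i)^2 * k (y - x0))"
    unfolding set_lebesgue_integral_def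
    by (intro Bochner_Integration.integral_cong) (auto simp: k_def kern_def indicator_def)
  with moment have moment': "1/2 < (LINT y|lebesgue. ((y - x0) $ i)^2 * k (y - x0))"
    by simp
  then have int: "integrable lebesgue (\<lambda>y. ((y - x0) $ i)^2 * k (y - x0))"
    using not_integrable_integral_eq by fastforce
  obtain K where "K \<in> borel_measurable borel" and K_nonneg: "\<And>h. 0 \<le> K h"
    and Kk: "AE h in lborel. K h = k h"
    and K_moment: "(\<integral>\<^sup>+ h. ennreal ((h $ i)^2 * K h) \<partial>lborel)
      = ennreal (LINT y|lebesgue. ((y - x0) $ i)^2 * k (y - x0))"
    by (rule borel_kernel_of_integrable_moment[OF int k_nonneg]) (rule that)
  show thesis
  proof (rule that)
    show "K \<in> borel_measurable borel"
      by fact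
    show "0 \<le> K h" for h
      by (rule K_nonneg)
    show "AE h in lborel. K h = g \<delta> (norm h) * indicator {0..r} (norm h)"
      using Kk by (simp add: k_def)
    show "AE h in lborel. K h \<noteq> 0 \<longrightarrow> norm h \<le> \<delta>"
      using Kk by eventually_elim (use g_zero in \<open>force simp: k_def\<close>)
    have "ennreal (1/2) \<le> (\<integral>\<^sup>+ h. ennreal ((h $ i)^2 * K h) \<partial>lborel)"
      unfolding K_moment using moment' by (intro ennreal_leI less_imp_le)
    also have "\<dots> \<le> (\<integral>\<^sup>+ h. ennreal (K h * (norm h)^2) \<partial>lborel)"
    proof (intro nn_integral_mono ennreal_leI)
      fix h :: pt
      have "(h $ i)^2 \<le> (norm h)^2"
        using component_le_norm_cart[of h i] abs_le_square_iff[of "h $ i" "norm h"] by simp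
      then show "(h $ i)^2 * K h \<le> K h * (norm h)^2"
        using K_nonneg[of h] by (simp add: mult.commute mult_left_mono)
    qed
    finally show "ennreal (1/2) \<le> (\<integral>\<^sup>+ h. ennreal (K h * (norm h)^2) \<partial>lborel)" .
  qed
qed

lemma L2_norm_sq_le_kern_trunc_energy:
  fixes \<Omega> :: "pt set" and x0 :: pt
  assumes "open \<Omega>" and diam: "\<And>x y. x \<in> \<Omega> \<Longrightarrow> y \<in> \<Omega> \<Longrightarrow> norm (y - x) < L"
    and "0 < L" "\<delta> \<le> L"
    and g_nonneg: "\<And>t. 0 \<le> t \<Longrightarrow> 0 \<le> g \<delta> t" and g_zero: "\<And>t. \<delta> < t \<Longrightarrow> g \<delta> t = 0"
    and moment: "1/2 < (LINT y:{y. norm (y - x0) \<le> r}|lebesgue. \<bar>y $ i - x0 $ i\<bar>^2 * kern g \<delta> x0 y)"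
    and u: "u \<in> Vspace \<Omega> g \<delta>"
  shows "L2_norm_sq \<Omega> u \<le> ennreal (4 * L^2) * nl_norm_sq (kern_trunc g \<delta> r) (Omega_hat \<Omega> \<delta>) u"
proof -
  obtain K :: "pt \<Rightarrow> real" where K_borel: "K \<in> borel_measurable borel" and K_nonneg: "\<And>h. 0 \<le> K h"
    and Kk: "AE h in lborel. K h = g \<delta> (norm h) * indicator {0..r} (norm h)"
    and K_short: "AE h in lborel. K h \<noteq> 0 \<longrightarrow> norm h \<le> \<delta>"
    and K_second_moment: "ennreal (1/2) \<le> (\<integral>\<^sup>+ h. ennreal (K h * (norm h)^2) \<partial>lborel)"
    using g_nonneg g_zero moment by (rule trunc_kernel_borel_representative) (auto intro: that)
  have "set_borel_measurable lebesgue (Omega_hat \<Omega> \<delta>) u"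
    using u by (simp add: Vspace_def)
  then have "set_borel_measurable lebesgue \<Omega> u"
    by (rule set_borel_measurable_subset) (use \<open>open \<Omega>\<close> in \<open>auto simp: Omega_hat_def\<close>)
  then obtain w where w_borel: "w \<in> borel_measurable borel"
    and w_supp: "\<And>x. x \<notin> \<Omega> \<Longrightarrow> w x = 0" and wu: "AE x in lborel. w x = indicator \<Omega> x * u x"
    using borel_open[OF \<open>open \<Omega>\<close>] by (rule zero_extension_borel_representative) (rule that)
  let ?N = "\<integral>\<^sup>+ x. ennreal ((w x)^2) \<partial>lborel"
  let ?E = "nl_norm_sq (kern_trunc g \<delta> r) (Omega_hat \<Omega> \<delta>) u"
  have L2: "L2_norm_sq \<Omega> u = ?N"
    unfolding L2_norm_sq_def nn_integral_completion using wu
    by (intro nn_integral_cong_AE) (auto simp: indicator_def)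
  have u_zero: "\<forall>x\<in>Omega_c \<Omega> \<delta>. u x = 0"
    using u by (simp add: Vspace_def)
  have "?E = nonlocal_energy (\<lambda>h. g \<delta> (norm h) * indicator {0..r} (norm h)) (\<lambda>x. indicator \<Omega> x * u x)"
    by (rule nl_norm_sq_kern_trunc_eq_nonlocal_energy[where g=g, OF \<open>open \<Omega>\<close> g_zero u_zero])
  also have "\<dots> = nonlocal_energy K w"
    by (rule nonlocal_energy_cong_AE[OF wu Kk, symmetric])
  finally have energy: "?E = nonlocal_energy K w" .
  have "AE h in lborel. K h \<noteq> 0 \<longrightarrow> norm h \<le> L"
    using K_short by eventually_elim (use \<open>\<delta> \<le> L\<close> in auto)
  with w_borel K_borel w_supp diam \<open>0 < L\<close> K_nonneg
  have poincare: "(\<integral>\<^sup>+ h. ennreal (K h * (norm h)^2) \<partial>lborel) * ?N \<le> ennreal (2 * L^2) * ?E"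
    unfolding energy by (rule nonlocal_poincare)
  have "?N = 2 * (ennreal (1/2) * ?N)"
    using ennreal_mult[of 2 "1/2"] by (simp add: mult.assoc[symmetric])
  also have "\<dots> \<le> 2 * (ennreal (2 * L^2) * ?E)"
    using mult_right_mono[OF K_second_moment, of ?N] poincare by (intro mult_left_mono) auto
  also have "\<dots> = ennreal (4 * L^2) * ?E"
    using ennreal_mult[of 2 "2 * L^2"] by (simp add: mult.assoc)
  finally show ?thesis
    using L2 by simp
qed

lemma L2_norm_sq_le_nl_norm_sq_trunc_and_poly:
  fixes \<Omega> :: "pt set" and x0 :: pt
  assumes "open \<Omega>" and diam: "\<And>x y. x \<in> \<Omega> \<Longrightarrow> y \<in> \<Omega> \<Longrightarrow> norm (y - x) < L"
    and "0 < L" "\<delta> \<le> L"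
    and g_nonneg: "\<And>t. 0 \<le> t \<Longrightarrow> 0 \<le> g \<delta> t" and g_zero: "\<And>t. \<delta> < t \<Longrightarrow> g \<delta> t = 0"
    and P: "\<And>x. polygon (P \<delta> x) \<and> P \<delta> x \<subseteq> cball x \<delta>"
    and moment: "1/2 < (LINT y:{y. norm (y - x0) \<le> r_low \<Omega> P \<delta>}|lebesgue.
      \<bar>y $ i - x0 $ i\<bar>^2 * kern g \<delta> x0 y)"
    and u: "u \<in> Vspace \<Omega> g \<delta>"
  shows "L2_norm_sq \<Omega> u \<le> ennreal ((3 * L)^2) * nl_norm_sq (kern_trunc g \<delta> (r_low \<Omega> P \<delta>)) (Omega_hat \<Omega> \<delta>) u
    \<and> L2_norm_sq \<Omega> u \<le> ennreal ((3 * L)^2) * nl_norm_sq (kern_poly g P \<delta>) (Omega_hat \<Omega> \<delta>) u"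
proof -
  let ?T = "nl_norm_sq (kern_trunc g \<delta> (r_low \<Omega> P \<delta>)) (Omega_hat \<Omega> \<delta>) u"
  let ?Q = "nl_norm_sq (kern_poly g P \<delta>) (Omega_hat \<Omega> \<delta>) u"
  have trunc: "L2_norm_sq \<Omega> u \<le> ennreal (4 * L^2) * ?T"
    by (rule L2_norm_sq_le_kern_trunc_energy[OF assms(1-6) moment u])
  have "?T \<le> 2 * ?Q"
    using g_nonneg P u by (intro nl_norm_sq_kern_trunc_le_kern_poly) (auto simp: Vspace_def)
  then have "ennreal (4 * L^2) * ?T \<le> (ennreal (4 * L^2) * 2) * ?Q"
    unfolding mult.assoc by (rule mult_left_mono) simp
  also have "ennreal (4 * L^2) * 2 = ennreal (8 * L^2)"
    using ennreal_mult[of "4 * L^2" 2] by simp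
  also have "ennreal (8 * L^2) * ?Q \<le> ennreal ((3 * L)^2) * ?Q"
    by (intro mult_right_mono ennreal_leI) (simp_all add: power_mult_distrib)
  finally have poly: "ennreal (4 * L^2) * ?T \<le> ennreal ((3 * L)^2) * ?Q" .
  have "ennreal (4 * L^2) * ?T \<le> ennreal ((3 * L)^2) * ?T"
    by (intro mult_right_mono ennreal_leI) (simp_all add: power_mult_distrib)
  with trunc poly show ?thesis
    by (auto intro: order_trans)
qed

theorem lemma3p5:
  fixes \<Omega> :: "pt set"
    and g :: "real \<Rightarrow> real \<Rightarrow> real"
    and P :: "real \<Rightarrow> pt \<Rightarrow> pt set"
  assumes "open \<Omega>" and "bounded \<Omega>"
    and g_nonneg: "\<And>\<delta> t. 0 < \<delta> \<Longrightarrow> 0 \<le> t \<Longrightarrow> 0 \<le> g \<delta> t"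
    and g_pos: "\<And>\<delta> t. 0 < \<delta> \<Longrightarrow> 0 \<le> t \<Longrightarrow> t < \<delta> \<Longrightarrow> 0 < g \<delta> t"
    and g_zero: "\<And>\<delta> t. 0 < \<delta> \<Longrightarrow> t > \<delta> \<Longrightarrow> g \<delta> t = 0"
    and g_moment: "\<And>\<delta> i. 0 < \<delta> \<Longrightarrow>
         (LINT z:cball (0::pt) \<delta>|lebesgue. (z $ (i::2))^2 * g \<delta> (norm z)) = 1"
    and P_poly: "\<And>\<delta> x. 0 < \<delta> \<Longrightarrow> polygon (P \<delta> x) \<and> P \<delta> x \<subseteq> cball x \<delta>"
    and lim: "\<And>x i. x \<in> \<Omega> \<Longrightarrow>
         ((\<lambda>\<delta>. LINT y:{y. norm (y - x) \<le> r_low \<Omega> P \<delta>}|lebesgue.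
               \<bar>y $ i - x $ i\<bar>^2 * kern g \<delta> x y) \<longlongrightarrow> 1) (at_right 0)"
  shows "\<exists>\<delta>0>0. \<exists>C>0. \<forall>\<delta>. 0 < \<delta> \<and> \<delta> < \<delta>0 \<longrightarrow>
           (\<forall>u\<in>Vspace \<Omega> g \<delta>.
              L2_norm_sq \<Omega> u \<le> ennreal (C^2) *
                 nl_norm_sq (kern_trunc g \<delta> (r_low \<Omega> P \<delta>)) (Omega_hat \<Omega> \<delta>) u
            \<and> L2_norm_sq \<Omega> u \<le> ennreal (C^2) *
                 nl_norm_sq (kern_poly g P \<delta>) (Omega_hat \<Omega> \<delta>) u)"
proof (cases "\<Omega> = {}")
  case True
  then show ?thesis
    by (auto simp: L2_norm_sq_def intro!: exI[of _ 1])
next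
  case False
  then obtain x0 where "x0 \<in> \<Omega>"
    by blast
  define L where "L = diameter \<Omega> + 1"
  have "0 < L" and diam: "\<And>x y. x \<in> \<Omega> \<Longrightarrow> y \<in> \<Omega> \<Longrightarrow> norm (y - x) < L"
    using diameter_ge_0[OF \<open>bounded \<Omega>\<close>] diameter_bounded_bound[OF \<open>bounded \<Omega>\<close>]
    by (force simp: L_def dist_norm norm_minus_commute)+
  obtain b where "0 < b" and moment: "\<And>\<delta>. 0 < \<delta> \<Longrightarrow> \<delta> < b \<Longrightarrow>
      1/2 < (LINT y:{y. norm (y - x0) \<le> r_low \<Omega> P \<delta>}|lebesgue. \<bar>y $ 1 - x0 $ 1\<bar>^2 * kern g \<delta> x0 y)"
    using order_tendstoD(1)[OF lim[OF \<open>x0 \<in> \<Omega>\<close>, of 1], of "1/2"]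
    by (auto simp: eventually_at_right_field)
  have "\<forall>\<delta>. 0 < \<delta> \<and> \<delta> < min b L \<longrightarrow> (\<forall>u\<in>Vspace \<Omega> g \<delta>.
      L2_norm_sq \<Omega> u \<le> ennreal ((3 * L)^2) * nl_norm_sq (kern_trunc g \<delta> (r_low \<Omega> P \<delta>)) (Omega_hat \<Omega> \<delta>) u
    \<and> L2_norm_sq \<Omega> u \<le> ennreal ((3 * L)^2) * nl_norm_sq (kern_poly g P \<delta>) (Omega_hat \<Omega> \<delta>) u)"
    using g_nonneg g_zero P_poly moment
    by (intro allI impI ballI L2_norm_sq_le_nl_norm_sq_trunc_and_poly[OF \<open>open \<Omega>\<close> diam \<open>0 < L\<close>]) auto
  then show ?thesis
    using \<open>0 < b\<close> \<open>0 < L\<close> by (intro exI[of _ "min b L"] conjI exI[of _ "3 * L"]) auto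
qed

end
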